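(* Let $\boldsymbol{A},\boldsymbol{B},\boldsymbol{C}\in\mathbb{R}^2$ be three pairwise distinct points carrying scalar vorticities $\omega_A,\omega_B,\omega_C\in\mathbb{R}$. Define the effect of $\boldsymbol{A}$'s action on $\boldsymbol{B}$ on the interaction energy between $\boldsymbol{B}$ and $\boldsymbol{C}$ as \[D(\boldsymbol{A},\boldsymbol{B},\boldsymbol{C})=\nabla_{\boldsymbol{B}}\Big(\tfrac{1}{4\pi}\,\omega_B\,\omega_C\log\|\boldsymbol{B}-\boldsymbol{C}\|\Big)\cdot \boldsymbol{u}_{\boldsymbol{A}}(\boldsymbol{B}),\qquad \boldsymbol{u}_{\boldsymbol{A}}(\boldsymbol{B})=\frac{\omega_A}{2\pi}\,\frac{(\boldsymbol{B}-\boldsymbol{A})^{\perp}}{\|\boldsymbol{B}-\boldsymbol{A}\|^2},\] where $(x,y)^\perp=(-y,x)$, and the gradient is taken with respect to the position $\boldsymbol{B}$ with $\omega_B,\omega_C,\boldsymbol{C}$ held fixed. Then \[D(\boldsymbol{A},\boldsymbol{B},\boldsymbol{C})=-\,D(\boldsymbol{C},\boldsymbol{B},\boldsymbol{A}),\] i.e. $\boldsymbol{A}$'s action on $\boldsymbol{B}$ changes the interaction energy between $\boldsymbol{B}$ and $\boldsymbol{C}$ exactly oppositely to how $\boldsymbol{C}$'s action on $\boldsymbol{B}$ changes the interaction energy between $\boldsymbol{A}$ and $\boldsymbol{B}$.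
   Context: Setting: the 2-dimensional incompressible Euler equations in vorticity form, where the (scalar) vorticity is transported by the fluid (in coordinates advecting with the fluid, the vorticity of a fluid particle is constant and only its position changes), and velocity is obtained from vorticity by the 2D Biot–Savart law, so that the velocity induced at $\boldsymbol{B}$ by vorticity $\omega_A$ located at $\boldsymbol{A}$ is $\boldsymbol{u}_{\boldsymbol{A}}(\boldsymbol{B})$ as given. The 2D interaction energy between vortices $\omega(\boldsymbol{y})$ at $\boldsymbol{y}$ and $\omega(\boldsymbol{z})$ at $\boldsymbol{z}$ is $I_{2d}=\frac{1}{4\pi}\omega(\boldsymbol{y})\omega(\boldsymbol{z})\log\|\boldsymbol{z}-\boldsymbol{y}\|$. *)

theory Defs
  imports "HOL-Analysis.Analysis"
begin

text \<open>Points of the plane are modelled as \<open>real^2\<close>; components 1 and 2 are x and y.\<close>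

definition perp :: "real^2 \<Rightarrow> real^2" where
  "perp v = vector [- (v$2), v$1]"

definition vel :: "real \<Rightarrow> real^2 \<Rightarrow> real^2 \<Rightarrow> real^2" where
  "vel wA A B = (wA / (2 * pi)) *\<^sub>R ((1 / (norm (B - A))\<^sup>2) *\<^sub>R perp (B - A))"

definition I2d :: "real \<Rightarrow> real^2 \<Rightarrow> real \<Rightarrow> real^2 \<Rightarrow> real" where
  "I2d wy y wz z = 1 / (4 * pi) * wy * wz * ln (norm (z - y))"

definition Deff :: "real \<Rightarrow> real^2 \<Rightarrow> real \<Rightarrow> real^2 \<Rightarrow> real \<Rightarrow> real^2 \<Rightarrow> real" where
  "Deff wA A wB B wC C =
     (THE g. GDERIV (\<lambda>X. I2d wB X wC C) B :> g) \<bullet> vel wA A B"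

end

theory Submission
  imports Defs
begin

text \<open>The gradient of \<open>ln \<parallel>B - C\<parallel>\<close> in \<open>B\<close> is \<open>(B - C) / \<parallel>B - C\<parallel>\<^sup>2\<close>, so
  \<open>D(A, B, C) = \<omega>\<^sub>A \<omega>\<^sub>B \<omega>\<^sub>C / (8 \<pi>\<^sup>2 \<parallel>B - C\<parallel>\<^sup>2 \<parallel>B - A\<parallel>\<^sup>2) \<cdot> (B - C) \<bullet> (B - A)\<^sup>\<perp>\<close>.
  The prefactor is symmetric in \<open>A\<close> and \<open>C\<close>, whereas \<open>u \<bullet> v\<^sup>\<perp>\<close> is the
  planar cross product and hence antisymmetric.\<close>

lemma GDERIV_ln_norm_diff:
  fixes x c :: "'a::real_inner"
  assumes "x \<noteq> c"
  shows "GDERIV (\<lambda>y. ln (norm (y - c))) x :> (1 / (norm (x - c))\<^sup>2) *\<^sub>R (x - c)"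
proof -
  have "GDERIV (\<lambda>y. norm (y - c)) x :> sgn (x - c)"
    unfolding gderiv_def using assms
    by (auto intro!: derivative_eq_intros has_derivative_compose[OF _ has_derivative_norm])
  moreover have "DERIV ln (norm (x - c)) :> 1 / norm (x - c)"
    using assms by (auto intro!: derivative_eq_intros)
  ultimately have "GDERIV (\<lambda>y. ln (norm (y - c))) x :> (1 / norm (x - c)) *\<^sub>R sgn (x - c)"
    by (rule GDERIV_DERIV_compose)
  then show ?thesis
    by (simp add: sgn_div_norm power2_eq_square divide_inverse inverse_mult_distrib)
qed

lemma gderiv_unique:
  fixes f :: "'a::real_inner \<Rightarrow> real"
  assumes "GDERIV f x :> D" and "GDERIV f x :> E"
  shows "D = E"
proof -
  have "(\<lambda>h. h \<bullet> D) = (\<lambda>h. h \<bullet> E)"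
    using assms unfolding gderiv_def by (rule has_derivative_unique)
  then have "(D - E) \<bullet> (D - E) = 0"
    by (metis inner_diff_right right_minus_eq)
  then show ?thesis by simp
qed

lemma GDERIV_I2d:
  assumes "B \<noteq> C"
  shows "GDERIV (\<lambda>X. I2d wB X wC C) B
           :> (wB * wC / (4 * pi * (norm (B - C))\<^sup>2)) *\<^sub>R (B - C)"
proof -
  have "(\<lambda>X. I2d wB X wC C) = (\<lambda>X. (wB * wC / (4 * pi)) * ln (norm (X - C)))"
    unfolding I2d_def by (simp add: norm_minus_commute)
  then show ?thesis
    by (simp only:)
      (rule GDERIV_subst[OF GDERIV_mult[OF GDERIV_const GDERIV_ln_norm_diff[OF assms]]], simp)
qed

lemma Deff_eq:
  assumes "B \<noteq> C"
  shows "Deff wA A wB B wC C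
           = wA * wB * wC / (8 * pi\<^sup>2 * (norm (B - C))\<^sup>2 * (norm (B - A))\<^sup>2)
             * ((B - C) \<bullet> perp (B - A))"
proof -
  have "(THE g. GDERIV (\<lambda>X. I2d wB X wC C) B :> g)
          = (wB * wC / (4 * pi * (norm (B - C))\<^sup>2)) *\<^sub>R (B - C)"
    using GDERIV_I2d[OF assms] gderiv_unique by blast
  then show ?thesis
    unfolding Deff_def vel_def by (simp add: power2_eq_square mult_ac)
qed

lemma inner_perp_antisym:
  fixes u v :: "real^2"
  shows "u \<bullet> perp v = - (v \<bullet> perp u)"
  unfolding perp_def inner_vec_def by (simp add: sum_2 vector_def)

theorem proposition1:
  fixes A B C :: "real^2" and wA wB wC :: real
  assumes "A \<noteq> B" and "B \<noteq> C" and "A \<noteq> C"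
  shows "Deff wA A wB B wC C = - Deff wC C wB B wA A"
proof -
  have "Deff wA A wB B wC C
          = wA * wB * wC / (8 * pi\<^sup>2 * (norm (B - C))\<^sup>2 * (norm (B - A))\<^sup>2)
            * ((B - C) \<bullet> perp (B - A))"
    using assms(2) by (rule Deff_eq)
  moreover have "Deff wC C wB B wA A
          = wC * wB * wA / (8 * pi\<^sup>2 * (norm (B - A))\<^sup>2 * (norm (B - C))\<^sup>2)
            * ((B - A) \<bullet> perp (B - C))"
    using assms(1) by (intro Deff_eq) simp
  moreover have "(B - C) \<bullet> perp (B - A) = - ((B - A) \<bullet> perp (B - C))"
    by (rule inner_perp_antisym)
  ultimately show ?thesis
    by (simp add: ac_simps)
qed

end
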